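(* Let $G=(V,E)$ be a finite simple undirected graph, with a (possibly empty) set of boundary vertices $\partial G\subseteq V$, each boundary vertex having degree exactly one. Let $\mathring V=V\setminus\partial G$ and let $\mathring E$ be the set of edges with both endpoints in $\mathring V$. Give each edge $e$ an arbitrary orientation $e=(u,v)$ and a coordinate $x_e\in[0,1]$ with $x_e=0$ at $u$ and $x_e=1$ at $v$; for a vertex $v$ incident to $e$ write $x_{e,v}\in\{0,1\}$ for the value of $x_e$ at $v$. Let $f$ be a real function on the geometric realization (unit-length edges) such that for each edge $e$ there are real constants $C(e),B(e)$ with $f(e,x_e)=C(e)\cos(B(e)+\pi x_e)$ for $x_e\in[0,1]$, such that $f$ vanishes at every vertex (i.e. $f(e,x_{e,v})=0$ for every edge $e$ and endpoint $v$), and such that $f$ is edge-based, i.e. for every vertex $v\in V$ $$\sum_{e\ni v}(-1)^{1-x_{e,v}}\frac{\partial f}{\partial x_e}(e,x_{e,v})=0.$$ Then $f$ vanishes identically on every edge not in $\mathring E$, and for each $e\in\mathring E$ there is a real constant $D(e)$ with $f(e,x_e)=D(e)\cos(\tfrac{\pi}{2}+\pi x_e)$, where $$\sum_{e\ni v,\ e\in\mathring E}D(e)=0\quad\text{for all } v\in\mathring V.$$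
   Context: The factor $(-1)^{1-x_{e,v}}$ turns the derivative along $x_e$ into the outward-pointing derivative at $v$; the edge-based condition says the outward derivatives of $f$ at each vertex sum to zero (the vertex-based Laplacian of $f$ vanishes). Such $f$ are the eigenfunctions of the edge-based Laplacian $\Delta_E f=-f''$ with frequency $\omega=\pi$ (eigenvalue $\pi^2$) that are zero on the vertices. *)

theory Defs
  imports "HOL-Analysis.Analysis"
begin

text \<open>A finite simple undirected graph on vertex set V, each undirected edge
  given exactly once with an arbitrary orientation (u,v): no loops and never
  both (u,v) and (v,u).\<close>
definition oriented_simple_graph :: "'v set \<Rightarrow> ('v \<times> 'v) set \<Rightarrow> bool" where
  "oriented_simple_graph V E \<longleftrightarrow> finite V \<and> E \<subseteq> V \<times> V \<and>
     (\<forall>(u,v)\<in>E. u \<noteq> v \<and> (v,u) \<notin> E)"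

definition incident :: "'v \<Rightarrow> ('v \<times> 'v) \<Rightarrow> bool" where
  "incident v e \<longleftrightarrow> fst e = v \<or> snd e = v"

definition degree :: "('v \<times> 'v) set \<Rightarrow> 'v \<Rightarrow> nat" where
  "degree E v = card {e \<in> E. incident v e}"

definition interior_edges :: "('v \<times> 'v) set \<Rightarrow> 'v set \<Rightarrow> ('v \<times> 'v) set" where
  "interior_edges E Bd = {e \<in> E. fst e \<notin> Bd \<and> snd e \<notin> Bd}"

definition edge_deriv :: "(real \<Rightarrow> real) \<Rightarrow> real \<Rightarrow> real" where
  "edge_deriv g x = (THE D. (g has_real_derivative D) (at x within {0..1}))"

text \<open>Edge-based condition: sum over incident edges of (-1)^(1 - x_{e,v}) times
  the derivative at v; x_{e,v} = 0 at the tail fst e, 1 at the head snd e.\<close>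
definition edge_based :: "'v set \<Rightarrow> ('v \<times> 'v) set \<Rightarrow> ('v \<times> 'v \<Rightarrow> real \<Rightarrow> real) \<Rightarrow> bool" where
  "edge_based V E f \<longleftrightarrow> (\<forall>v\<in>V.
     (\<Sum>e\<in>{e\<in>E. incident v e}.
        (if snd e = v then edge_deriv (f e) 1 else 0) -
        (if fst e = v then edge_deriv (f e) 0 else 0)) = 0)"

end

theory Submission
  imports Defs
begin

text \<open>A mode C cos(B + \<pi> x) vanishing at one end of an edge is a multiple of
  sin(\<pi> x) = -cos(\<pi>/2 + \<pi> x); its one-sided derivatives at the ends are therefore
  \<mp>\<pi> times the amplitude, so the edge-based condition at a vertex says that the
  amplitudes D(e) of the incident edges sum to zero. At a boundary vertex there is
  only one incident edge, whose amplitude must then vanish; dropping these zero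
  amplitudes from the sums at interior vertices leaves the stated relation.\<close>

lemma edge_deriv_eqI:
  assumes "(g has_real_derivative D) (at x within {0..1})" and "x \<in> {0..1}"
  shows "edge_deriv g x = D"
proof -
  have "at x within {0..1} \<noteq> bot"
    using assms(2) by (cases "x = 0"; cases "x = 1")
      (auto simp: at_within_Icc_at_right at_within_Icc_at_left at_within_Icc_at)
  then show ?thesis
    unfolding edge_deriv_def using assms(1)
    by (blast intro: the_equality dest: has_field_derivative_unique)
qed

lemma cos_mode_vanishing_at_0:
  assumes mode: "\<forall>x\<in>{0..1}. g x = C * cos (B + pi * x)" and "g 0 = 0"
  shows "\<forall>x\<in>{0..1}. g x = - g (1/2) * cos (pi / 2 + pi * x)"
proof -
  have cos_B: "C * cos B = 0" using assms by auto
  have sine: "g x = - (C * sin B) * sin (pi * x)" if "x \<in> {0..1}" for x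
  proof -
    have "g x = C * (cos B * cos (pi * x) - sin B * sin (pi * x))"
      using mode that by (simp add: cos_add)
    also have "\<dots> = (C * cos B) * cos (pi * x) - (C * sin B) * sin (pi * x)"
      by (simp add: algebra_simps)
    finally have "g x = (C * cos B) * cos (pi * x) - (C * sin B) * sin (pi * x)" .
    then show ?thesis using cos_B by simp
  qed
  then have "g (1/2) = - (C * sin B)" by simp
  then show ?thesis using sine by (simp add: cos_add)
qed

lemma edge_deriv_sine_mode:
  assumes "\<forall>x\<in>{0..1}. g x = D * cos (pi / 2 + pi * x)"
  shows "edge_deriv g 0 = - D * pi" and "edge_deriv g 1 = D * pi"
proof -
  have deriv: "edge_deriv g y = - D * pi * sin (pi / 2 + pi * y)" if y: "y \<in> {0..1}" for y
  proof (rule edge_deriv_eqI[OF _ y])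
    have "((\<lambda>x. D * cos (pi / 2 + pi * x)) has_real_derivative
           - D * pi * sin (pi / 2 + pi * y)) (at y within {0..1})"
      by (auto intro!: derivative_eq_intros)
    then show "(g has_real_derivative - D * pi * sin (pi / 2 + pi * y)) (at y within {0..1})"
      using assms y by (auto intro: has_field_derivative_transform_within[where d=1])
  qed
  show "edge_deriv g 0 = - D * pi" using deriv[of 0] by simp
  have "sin (pi / 2 + pi * 1) = -1" using sin_periodic_pi[of "pi / 2"] by simp
  then show "edge_deriv g 1 = D * pi" using deriv[of 1] by simp
qed

lemma edge_based_sine_modes_balanced:
  assumes eb: "edge_based V E f"
    and no_loops: "\<forall>e\<in>E. fst e \<noteq> snd e"
    and modes: "\<forall>e\<in>E. \<forall>x\<in>{0..1}. f e x = D e * cos (pi / 2 + pi * x)"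
    and "v \<in> V"
  shows "(\<Sum>e\<in>{e\<in>E. incident v e}. D e) = 0"
proof -
  have "pi * (\<Sum>e\<in>{e\<in>E. incident v e}. D e) = (\<Sum>e\<in>{e\<in>E. incident v e}. pi * D e)"
    by (rule sum_distrib_left)
  also have "\<dots> = (\<Sum>e\<in>{e\<in>E. incident v e}.
      (if snd e = v then edge_deriv (f e) 1 else 0) -
      (if fst e = v then edge_deriv (f e) 0 else 0))"
  proof (rule sum.cong[OF refl])
    fix e assume e: "e \<in> {e\<in>E. incident v e}"
    then have "edge_deriv (f e) 0 = - D e * pi" "edge_deriv (f e) 1 = D e * pi"
      using edge_deriv_sine_mode modes by auto
    then show "pi * D e = (if snd e = v then edge_deriv (f e) 1 else 0) -
        (if fst e = v then edge_deriv (f e) 0 else 0)"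
      using e no_loops unfolding incident_def by auto
  qed
  also have "\<dots> = 0" using eb \<open>v \<in> V\<close> unfolding edge_based_def by blast
  finally show ?thesis by simp
qed

lemma degree_one_vertex_sum:
  assumes "degree E w = 1" and "e \<in> E" and "incident w e"
  shows "(\<Sum>e'\<in>{e'\<in>E. incident w e'}. D e') = D e"
proof -
  obtain e0 where "{e' \<in> E. incident w e'} = {e0}"
    using assms(1) unfolding degree_def by (rule card_1_singletonE)
  with assms(2,3) show ?thesis by auto
qed

lemma sum_incident_interior_edges:
  assumes "finite E" and "\<forall>e\<in>E - interior_edges E Bd. D e = 0"
  shows "(\<Sum>e\<in>{e\<in>interior_edges E Bd. incident v e}. D e) = (\<Sum>e\<in>{e\<in>E. incident v e}. D e)"
  by (rule sum.mono_neutral_left) (use assms in \<open>auto simp: interior_edges_def\<close>)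

theorem mainTheorem2:
  fixes V :: "'v set" and E :: "('v \<times> 'v) set" and Bd :: "'v set"
    and f :: "'v \<times> 'v \<Rightarrow> real \<Rightarrow> real"
  assumes graph: "oriented_simple_graph V E"
    and bd_sub: "Bd \<subseteq> V"
    and bd_deg: "\<forall>v\<in>Bd. degree E v = 1"
    and cos_form: "\<forall>e\<in>E. \<exists>C B. \<forall>x\<in>{0..1}. f e x = C * cos (B + pi * x)"
    and vanish: "\<forall>e\<in>E. f e 0 = 0 \<and> f e 1 = 0"
    and eb: "edge_based V E f"
  shows "(\<forall>e\<in>E - interior_edges E Bd. \<forall>x\<in>{0..1}. f e x = 0) \<and>
         (\<exists>D :: 'v \<times> 'v \<Rightarrow> real.
            (\<forall>e\<in>interior_edges E Bd. \<forall>x\<in>{0..1}. f e x = D e * cos (pi / 2 + pi * x)) \<and>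
            (\<forall>v\<in>V - Bd. (\<Sum>e\<in>{e\<in>interior_edges E Bd. incident v e}. D e) = 0))"
proof -
  define D where "D e = - f e (1/2)" for e
  have finite_E: "finite E" and no_loops: "\<forall>e\<in>E. fst e \<noteq> snd e"
    using graph unfolding oriented_simple_graph_def by (auto intro: finite_subset)
  have modes: "\<forall>e\<in>E. \<forall>x\<in>{0..1}. f e x = D e * cos (pi / 2 + pi * x)"
    using cos_form vanish cos_mode_vanishing_at_0 unfolding D_def by metis
  note balanced = edge_based_sine_modes_balanced[OF eb no_loops modes]
  have boundary_zero: "\<forall>e\<in>E - interior_edges E Bd. D e = 0"
  proof
    fix e assume "e \<in> E - interior_edges E Bd"
    then obtain w where "w \<in> Bd" "incident w e" "e \<in> E"
      unfolding interior_edges_def incident_def by auto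
    then show "D e = 0"
      using balanced degree_one_vertex_sum bd_deg bd_sub by (metis subsetD)
  qed
  show ?thesis
    using modes boundary_zero balanced sum_incident_interior_edges[OF finite_E boundary_zero]
    unfolding interior_edges_def by auto
qed

end
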